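(* There exist $K$-algebras which are elementwise locally unit-regular but not locally unit-regular.
   Context: $K$ is a field; algebras are associative, not necessarily unital. A unital ring $S$ is unit-regular if for each $x\in S$ there is a unit $u$ of $S$ with $xux = x$. A $K$-algebra $R$ is locally unit-regular if every finite subset of $R$ is contained in a $K$-subalgebra of $R$ that has its own identity element and is unit-regular. A ring $R$ is elementwise locally unit-regular if for each $x \in R$ there exist an idempotent $e \in R$ and a unit $u$ of the corner ring $eRe$ (with identity $e$) such that $x \in eRe$ and $xux = x$. *)

theory Defs
  imports Main
begin

text \<open>A (not necessarily unital, associative) algebra over a field 'k, given on an
explicit carrier set.\<close>

record ('k, 'a) kalg =
  carr :: "'a set"
  add  :: "'a \<Rightarrow> 'a \<Rightarrow> 'a"
  mul  :: "'a \<Rightarrow> 'a \<Rightarrow> 'a"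
  zer  :: "'a"
  smul :: "'k \<Rightarrow> 'a \<Rightarrow> 'a"

definition is_kalgebra :: "('k::field, 'a) kalg \<Rightarrow> bool" where
  "is_kalgebra A \<longleftrightarrow>
     zer A \<in> carr A \<and>
     (\<forall>x\<in>carr A. \<forall>y\<in>carr A. add A x y \<in> carr A \<and> mul A x y \<in> carr A) \<and>
     (\<forall>c. \<forall>x\<in>carr A. smul A c x \<in> carr A) \<and>
     (\<forall>x\<in>carr A. \<forall>y\<in>carr A. \<forall>z\<in>carr A. add A (add A x y) z = add A x (add A y z)) \<and>
     (\<forall>x\<in>carr A. \<forall>y\<in>carr A. add A x y = add A y x) \<and>
     (\<forall>x\<in>carr A. add A (zer A) x = x) \<and>
     (\<forall>x\<in>carr A. \<exists>y\<in>carr A. add A x y = zer A) \<and>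
     (\<forall>x\<in>carr A. \<forall>y\<in>carr A. \<forall>z\<in>carr A. mul A (mul A x y) z = mul A x (mul A y z)) \<and>
     (\<forall>x\<in>carr A. \<forall>y\<in>carr A. \<forall>z\<in>carr A.
        mul A x (add A y z) = add A (mul A x y) (mul A x z) \<and>
        mul A (add A x y) z = add A (mul A x z) (mul A y z)) \<and>
     (\<forall>a b. \<forall>x\<in>carr A. smul A (a + b) x = add A (smul A a x) (smul A b x)) \<and>
     (\<forall>a. \<forall>x\<in>carr A. \<forall>y\<in>carr A. smul A a (add A x y) = add A (smul A a x) (smul A a y)) \<and>
     (\<forall>a b. \<forall>x\<in>carr A. smul A (a * b) x = smul A a (smul A b x)) \<and>
     (\<forall>x\<in>carr A. smul A 1 x = x) \<and>
     (\<forall>a. \<forall>x\<in>carr A. \<forall>y\<in>carr A.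
        smul A a (mul A x y) = mul A (smul A a x) y \<and>
        smul A a (mul A x y) = mul A x (smul A a y))"

text \<open>K-subalgebra: a subset containing 0 and closed under the operations
(additive inverses are scalar multiples by -1).\<close>
definition is_subalgebra :: "('k::field, 'a) kalg \<Rightarrow> 'a set \<Rightarrow> bool" where
  "is_subalgebra A S \<longleftrightarrow> S \<subseteq> carr A \<and> zer A \<in> S \<and>
     (\<forall>x\<in>S. \<forall>y\<in>S. add A x y \<in> S \<and> mul A x y \<in> S) \<and>
     (\<forall>c. \<forall>x\<in>S. smul A c x \<in> S)"

definition is_identity_of :: "('k, 'a) kalg \<Rightarrow> 'a set \<Rightarrow> 'a \<Rightarrow> bool" where
  "is_identity_of A S e \<longleftrightarrow> e \<in> S \<and> (\<forall>x\<in>S. mul A e x = x \<and> mul A x e = x)"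

definition is_unit_in :: "('k, 'a) kalg \<Rightarrow> 'a set \<Rightarrow> 'a \<Rightarrow> 'a \<Rightarrow> bool" where
  "is_unit_in A S e u \<longleftrightarrow> u \<in> S \<and> (\<exists>v\<in>S. mul A u v = e \<and> mul A v u = e)"

definition unit_regular_in :: "('k, 'a) kalg \<Rightarrow> 'a set \<Rightarrow> 'a \<Rightarrow> bool" where
  "unit_regular_in A S e \<longleftrightarrow>
     (\<forall>x\<in>S. \<exists>u. is_unit_in A S e u \<and> mul A (mul A x u) x = x)"

definition locally_unit_regular :: "('k::field, 'a) kalg \<Rightarrow> bool" where
  "locally_unit_regular A \<longleftrightarrow>
     (\<forall>F. finite F \<and> F \<subseteq> carr A \<longrightarrow>
        (\<exists>S e. is_subalgebra A S \<and> F \<subseteq> S \<and> is_identity_of A S e \<and> unit_regular_in A S e))"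

definition corner :: "('k, 'a) kalg \<Rightarrow> 'a \<Rightarrow> 'a set" where
  "corner A e = {mul A e (mul A r e) | r. r \<in> carr A}"

definition elementwise_locally_unit_regular :: "('k, 'a) kalg \<Rightarrow> bool" where
  "elementwise_locally_unit_regular A \<longleftrightarrow>
     (\<forall>x\<in>carr A. \<exists>e\<in>carr A. mul A e e = e \<and> x \<in> corner A e \<and>
        (\<exists>u. is_unit_in A (corner A e) e u \<and> mul A (mul A x u) x = x))"

end

theory Submission
  imports Defs "HOL.Vector_Spaces" "HOL-Library.Poly_Mapping" "HOL-Library.Countable_Set"
begin

(* Split the index set of V = K^(N) into countably many infinite blocks (via prod_decode) and
   let V_n be spanned by the first n blocks.  The algebra is the union of the corners End(V_n)
   of End(V), each linear map being represented by its matrix.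

   Every element is unit-regular in a corner: an endomorphism f of V_n, viewed in End(V_(n+1)),
   has a kernel and a complement of its image that are both of countably infinite dimension
   (block n contributes to both).  So a basis of the image, lifted through f, together with a
   bijection between the remaining basis vectors, gives an automorphism u of V_(n+1) with
   f u f = f.

   Local unit-regularity fails because unit-regular rings are directly finite: with s, t the
   right and left shifts on block 0, so that t s = q is the projection onto block 0 but s t <> q,
   a unital subalgebra with identity e containing s and t contains t + (e - q), whose right
   inverse s + (e - q) is not a left inverse. *)

lemma (in vector_space) independent_Un:
  assumes A: "independent A" and B: "independent B" and disj: "span A \<inter> span B \<subseteq> {0}"
  shows "independent (A \<union> B)"
proof
  assume "dependent (A \<union> B)"
  then obtain a where a: "a \<in> A \<union> B" "a \<in> span ((A - {a}) \<union> (B - {a}))"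
    unfolding dependent_def by (auto simp: Un_Diff)
  then obtain x y where xy: "a = x + y" "x \<in> span (A - {a})" "y \<in> span (B - {a})"
    unfolding span_Un by blast
  have x: "x \<in> span A" and y: "y \<in> span B"
    using xy(2,3) span_mono[of "A - {a}" A] span_mono[of "B - {a}" B] by auto
  show False
  proof (cases "a \<in> A")
    case True
    then have "y \<in> span A"
      using x xy(1) span_diff[OF span_base[OF True] x] by simp
    with y disj have "y = 0" by blast
    with xy True A show False unfolding dependent_def by auto
  next
    case False
    with a have "a \<in> B" by blast
    then have "x \<in> span B"
      using y xy(1) span_diff[OF span_base[of a B] y] by simp
    with x disj have "x = 0" by blast
    with xy \<open>a \<in> B\<close> B show False unfolding dependent_def by auto
  qed
qed

lemma bij_betw_countably_infinite:
  assumes "countable A" "infinite A" "countable B" "infinite B"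
  obtains h where "bij_betw h A B"
proof -
  obtain eA :: "_ \<Rightarrow> nat" where "bij_betw eA A UNIV" using assms(1,2) by (rule countableE_infinite)
  moreover obtain eB :: "_ \<Rightarrow> nat" where "bij_betw eB B UNIV" using assms(3,4) by (rule countableE_infinite)
  ultimately show ?thesis using that bij_betw_trans bij_betw_inv_into by blast
qed

lemma bij_betw_extend_countably_infinite:
  assumes a: "inj_on a A" and disj: "A \<inter> G = {}" "a ` A \<inter> N = {}"
    and G: "countable G" "infinite G" and N: "countable N" "infinite N"
  obtains h where "bij_betw h (A \<union> G) (a ` A \<union> N)" "\<And>x. x \<in> A \<Longrightarrow> h x = a x"
proof -
  obtain h0 where h0: "bij_betw h0 G N" using G N by (rule bij_betw_countably_infinite)
  define h where "h x = (if x \<in> A then a x else h0 x)" for x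
  have "bij_betw h (A \<union> G) (a ` A \<union> N)"
  proof (rule bij_betw_combine[OF _ _ disj(2)])
    show "bij_betw h A (a ` A)" using a by (simp add: h_def bij_betw_imageI cong: bij_betw_cong)
    show "bij_betw h G N" using h0 disj(1) by (subst bij_betw_cong[of G h h0]) (auto simp: h_def)
  qed
  then show ?thesis using that by (simp add: h_def)
qed

section \<open>Finitely supported vectors\<close>

abbreviation lookup :: "('a \<Rightarrow>\<^sub>0 'b::zero) \<Rightarrow> 'a \<Rightarrow> 'b" where "lookup \<equiv> Poly_Mapping.lookup"
abbreviation keys :: "('a \<Rightarrow>\<^sub>0 'b::zero) \<Rightarrow> 'a set" where "keys \<equiv> Poly_Mapping.keys"

type_synonym 'k vec = "nat \<Rightarrow>\<^sub>0 'k"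

definition vec_scale :: "'k::field \<Rightarrow> 'k vec \<Rightarrow> 'k vec" where
  "vec_scale c = Poly_Mapping.map ((*) c)"

lemma lookup_vec_scale [simp]: "lookup (vec_scale c v) i = c * lookup v i"
  by (simp add: vec_scale_def Poly_Mapping.map.rep_eq when_def)

lemma vec_scale_minus_one [simp]: "vec_scale (-1) v = - v"
  by (rule poly_mapping_eqI) simp

interpretation V: vector_space "vec_scale :: 'k::field \<Rightarrow> 'k vec \<Rightarrow> 'k vec"
  by unfold_locales (auto intro!: poly_mapping_eqI simp: lookup_add algebra_simps)

interpretation VV: vector_space_pair "vec_scale :: 'k::field \<Rightarrow> _" "vec_scale :: 'k::field \<Rightarrow> _" ..

abbreviation lin :: "('k::field vec \<Rightarrow> 'k vec) \<Rightarrow> bool" where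
  "lin \<equiv> Vector_Spaces.linear vec_scale vec_scale"

lemma keys_vec_scale: "keys (vec_scale c v) \<subseteq> keys v"
  by (auto simp: in_keys_iff)

definition unit_vec :: "nat \<Rightarrow> 'k::field vec" where
  "unit_vec j = Poly_Mapping.single j 1"

lemma lookup_unit_vec: "lookup (unit_vec j) i = (if i = j then 1 else 0)"
  by (simp add: unit_vec_def lookup_single when_def)

lemma keys_unit_vec [simp]: "keys (unit_vec j) = {j}"
  by (simp add: unit_vec_def)

lemma inj_unit_vec: "inj unit_vec"
  by (rule injI) (metis keys_unit_vec singleton_inject)

lemma sum_unit_vec: "(\<Sum>i\<in>keys v. vec_scale (lookup v i) (unit_vec i)) = (v :: 'k::field vec)"
proof (rule poly_mapping_eqI)
  fix k
  show "lookup (\<Sum>i\<in>keys v. vec_scale (lookup v i) (unit_vec i)) k = lookup v k"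
    by (cases "k \<in> keys v") (auto simp: lookup_sum lookup_unit_vec in_keys_iff if_distrib sum.If_cases)
qed

lemma span_unit_vec: "V.span (unit_vec ` S :: 'k::field vec set) = {v. keys v \<subseteq> S}"
proof (rule V.span_subspace)
  show "unit_vec ` S \<subseteq> {v :: 'k vec. keys v \<subseteq> S}" by auto
  have "keys (x + y) \<subseteq> S" if "keys x \<subseteq> S" "keys y \<subseteq> S" for x y :: "'k vec"
    using keys_add[of x y] that by blast
  moreover have "keys (vec_scale c x) \<subseteq> S" if "keys x \<subseteq> S" for c and x :: "'k vec"
    using keys_vec_scale[of c x] that by blast
  ultimately show "V.subspace {v :: 'k vec. keys v \<subseteq> S}"
    unfolding V.subspace_def by simp
  show "{v :: 'k vec. keys v \<subseteq> S} \<subseteq> V.span (unit_vec ` S)"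
  proof
    fix v :: "'k vec" assume "v \<in> {v. keys v \<subseteq> S}"
    then have "(\<Sum>i\<in>keys v. vec_scale (lookup v i) (unit_vec i)) \<in> V.span (unit_vec ` S)"
      by (intro V.span_sum V.span_scale V.span_base) auto
    then show "v \<in> V.span (unit_vec ` S)" by (simp add: sum_unit_vec)
  qed
qed

lemma independent_unit_vec: "V.independent (unit_vec ` S :: 'k::field vec set)"
proof
  assume "V.dependent (unit_vec ` S :: 'k vec set)"
  then obtain j where "j \<in> S" "(unit_vec j :: 'k vec) \<in> V.span (unit_vec ` S - {unit_vec j})"
    unfolding V.dependent_def by blast
  moreover have "unit_vec ` S - {unit_vec j} = (unit_vec ` (S - {j}) :: 'k vec set)"
    using inj_unit_vec by (auto dest: injD)
  ultimately have "{j} \<subseteq> S - {j}" by (simp add: span_unit_vec)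
  then show False by simp
qed

lemma countable_independent:
  assumes "V.independent (J :: 'k::field vec set)"
  shows "countable J"
proof -
  have "J \<subseteq> (\<Union>F\<in>Collect finite. J \<inter> V.span (unit_vec ` F))"
  proof
    fix v assume "v \<in> J"
    then show "v \<in> (\<Union>F\<in>Collect finite. J \<inter> V.span (unit_vec ` F))"
      by (intro UN_I[of "keys v"]) (auto simp: span_unit_vec)
  qed
  moreover have "countable (J \<inter> V.span (unit_vec ` F))" if "finite F" for F
  proof -
    have "V.independent (J \<inter> V.span (unit_vec ` F))" by (rule V.independent_mono[OF assms]) blast
    then have "finite (J \<inter> V.span (unit_vec ` F))"
      using V.independent_span_bound[of "unit_vec ` F"] that by blast
    then show ?thesis by (rule countable_finite)
  qed
  ultimately show ?thesis
    by (metis countable_Collect_finite countable_UN countable_subset mem_Collect_eq)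
qed

lemma extend_basis_unit_vec:
  assumes "V.independent A" "V.span A = {v. keys v \<subseteq> S}" "S \<inter> X = {}"
  shows "V.independent (A \<union> unit_vec ` X)" "V.span (A \<union> unit_vec ` X) = {v. keys v \<subseteq> S \<union> X}"
proof -
  show "V.independent (A \<union> unit_vec ` X)"
  proof (intro V.independent_Un independent_unit_vec assms(1))
    show "V.span A \<inter> V.span (unit_vec ` X) \<subseteq> {0}"
    proof
      fix v assume "v \<in> V.span A \<inter> V.span (unit_vec ` X)"
      then have "keys v \<subseteq> S \<inter> X" using assms(2) by (auto simp: span_unit_vec)
      then show "v \<in> {0}" using assms(3) by simp
    qed
  qed
  have "V.span (A \<union> unit_vec ` X) = V.span (unit_vec ` S \<union> unit_vec ` X)"
    unfolding V.span_Un assms(2) span_unit_vec ..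
  then show "V.span (A \<union> unit_vec ` X) = {v. keys v \<subseteq> S \<union> X}"
    by (simp add: span_unit_vec flip: image_Un)
qed

definition from_columns :: "(nat \<Rightarrow> 'k::field vec) \<Rightarrow> 'k vec \<Rightarrow> 'k vec" where
  "from_columns c = VV.construct (range unit_vec) (\<lambda>b. c (inv unit_vec b))"

lemma lin_from_columns: "lin (from_columns c)"
  unfolding from_columns_def by (rule VV.linear_construct[OF independent_unit_vec])

lemma from_columns_unit_vec [simp]: "from_columns c (unit_vec j) = c j"
  unfolding from_columns_def
  by (simp add: VV.construct_basis[OF independent_unit_vec] inv_f_f[OF inj_unit_vec])

lemma lin_eqI:
  assumes "lin f" "lin g" "\<And>j. f (unit_vec j) = g (unit_vec j)"
  shows "f = g"
proof
  fix v :: "'a vec"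
  have "v \<in> V.span (range unit_vec)" by (simp add: span_unit_vec)
  then show "f v = g v" using VV.linear_eq_on[OF assms(1,2)] assms(3) by blast
qed

definition coord_proj :: "nat set \<Rightarrow> 'k::field vec \<Rightarrow> 'k vec" where
  "coord_proj S = Poly_Mapping.mapp (\<lambda>i c. if i \<in> S then c else 0)"

lemma lookup_coord_proj [simp]: "lookup (coord_proj S v) i = (if i \<in> S then lookup v i else 0)"
  by (simp add: coord_proj_def lookup_mapp when_def in_keys_iff)

lemma lin_coord_proj [simp]: "lin (coord_proj S)"
  unfolding linear_iff by (auto intro!: poly_mapping_eqI simp: lookup_add V.vector_space_axioms)

lemma keys_coord_proj: "keys (coord_proj S v) \<subseteq> S"
  by (auto simp: in_keys_iff split: if_splits)

lemma coord_proj_id: "keys v \<subseteq> S \<Longrightarrow> coord_proj S v = v"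
  by (rule poly_mapping_eqI) (auto simp: in_keys_iff)

lemma coord_proj_coord_proj: "coord_proj S (coord_proj T v) = coord_proj (S \<inter> T) v"
  by (rule poly_mapping_eqI) simp

lemma coord_proj_unit_vec: "coord_proj S (unit_vec j) = (if j \<in> S then unit_vec j else 0)"
  by (rule poly_mapping_eqI) (simp add: lookup_unit_vec)

section \<open>Unit-regularity in corners of coordinate subspaces\<close>

lemma construct_comp_construct:
  assumes C: "V.independent C" and D: "V.independent D"
    and g: "g ` D \<subseteq> C" "\<And>d. d \<in> D \<Longrightarrow> h (g d) = d" and x: "x \<in> V.span D"
  shows "VV.construct C h (VV.construct D g x) = x"
proof -
  have "(VV.construct C h \<circ> VV.construct D g) x = id x"
  proof (rule VV.linear_eq_on[OF _ V.linear_id x])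
    show "lin (VV.construct C h \<circ> VV.construct D g)"
      by (rule Vector_Spaces.linear_compose[OF VV.linear_construct[OF D] VV.linear_construct[OF C]])
    show "(VV.construct C h \<circ> VV.construct D g) d = id d" if "d \<in> D" for d
      using that g by (auto simp: VV.construct_basis[OF C] VV.construct_basis[OF D])
  qed
  then show ?thesis by simp
qed

lemma construct_inv_into:
  assumes C: "V.independent C" and D: "V.independent D" and h: "bij_betw h C D"
  shows "VV.construct C h v \<in> V.span D" "VV.construct D (inv_into C h) v \<in> V.span C"
    and "x \<in> V.span D \<Longrightarrow> VV.construct C h (VV.construct D (inv_into C h) x) = x"
    and "x \<in> V.span C \<Longrightarrow> VV.construct D (inv_into C h) (VV.construct C h x) = x"
proof -
  have "h ` C = D" "inj_on h C" using h by (auto simp: bij_betw_def)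
  moreover have "inv_into C h ` D = C" by (rule bij_betw_imp_surj_on[OF bij_betw_inv_into[OF h]])
  ultimately show "VV.construct C h v \<in> V.span D" "VV.construct D (inv_into C h) v \<in> V.span C"
    and "x \<in> V.span D \<Longrightarrow> VV.construct C h (VV.construct D (inv_into C h) x) = x"
    and "x \<in> V.span C \<Longrightarrow> VV.construct D (inv_into C h) (VV.construct C h x) = x"
    using VV.construct_in_span[OF C, of h v] VV.construct_in_span[OF D, of "inv_into C h" v] C D
    by (auto intro!: construct_comp_construct simp: f_inv_into_f inv_into_into)
qed

lemma construct_section:
  assumes f: "lin f" and C: "V.independent C" and h: "\<beta> \<subseteq> C" "\<And>b. b \<in> \<beta> \<Longrightarrow> f (h b) = b"
    and y: "y \<in> V.span \<beta>"
  shows "f (VV.construct C h y) = y"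
proof -
  have "(f \<circ> VV.construct C h) y = id y"
  proof (rule VV.linear_eq_on[OF _ V.linear_id y])
    show "lin (f \<circ> VV.construct C h)"
      by (rule Vector_Spaces.linear_compose[OF VV.linear_construct[OF C] f])
    show "(f \<circ> VV.construct C h) b = id b" if "b \<in> \<beta>" for b
      using that h VV.construct_basis[OF C] by auto
  qed
  then show ?thesis by simp
qed

lemma section_kernel_basis:
  assumes f: "lin f" and W: "V.subspace W"
    and \<beta>: "V.independent \<beta>" "f ` W \<subseteq> V.span \<beta>"
    and a: "\<And>b. b \<in> \<beta> \<Longrightarrow> a b \<in> W" "\<And>b. b \<in> \<beta> \<Longrightarrow> f (a b) = b"
    and \<nu>: "V.independent \<nu>" "\<nu> \<subseteq> W \<inter> {x. f x = 0}" "W \<inter> {x. f x = 0} \<subseteq> V.span \<nu>"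
  shows "V.independent (a ` \<beta> \<union> \<nu>)" "V.span (a ` \<beta> \<union> \<nu>) = W" "a ` \<beta> \<inter> \<nu> = {}"
proof -
  define s where "s = VV.construct \<beta> a"
  have s: "lin s" unfolding s_def by (rule VV.linear_construct[OF \<beta>(1)])
  have f_s: "f (s y) = y" if "y \<in> V.span \<beta>" for y
    unfolding s_def using construct_section[OF f \<beta>(1) subset_refl a(2) that] .
  have image: "a ` \<beta> = s ` \<beta>" using VV.construct_basis[OF \<beta>(1)] unfolding s_def by simp
  have span_image: "V.span (a ` \<beta>) = s ` V.span \<beta>"
    unfolding image by (rule VV.linear_span_image[OF s])
  have kernel: "f x = 0" if "x \<in> V.span \<nu>" for x
    using VV.linear_eq_on[OF f VV.linear_zero that] \<nu>(2) by auto
  have "V.independent (a ` \<beta>)"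
    unfolding image
    by (rule VV.linear_independent_injective_image[OF s \<beta>(1)]) (metis f_s inj_on_inverseI)
  moreover have "V.span (a ` \<beta>) \<inter> V.span \<nu> \<subseteq> {0}"
  proof
    fix x assume x: "x \<in> V.span (a ` \<beta>) \<inter> V.span \<nu>"
    then obtain y where y: "y \<in> V.span \<beta>" "x = s y" using span_image by auto
    have "y = f (s y)" using f_s y(1) by simp
    also have "\<dots> = 0" using x y(2) kernel by blast
    finally have "y = 0" .
    then show "x \<in> {0}" using y VV.linear_0[OF s] by simp
  qed
  ultimately show "V.independent (a ` \<beta> \<union> \<nu>)" using \<nu>(1) by (intro V.independent_Un)
  show "V.span (a ` \<beta> \<union> \<nu>) = W"
  proof (rule V.span_subspace[OF _ _ W])
    show "a ` \<beta> \<union> \<nu> \<subseteq> W" using a(1) \<nu>(2) by auto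
    show "W \<subseteq> V.span (a ` \<beta> \<union> \<nu>)"
    proof
      fix v assume v: "v \<in> W"
      have fv: "f v \<in> V.span \<beta>" using \<beta>(2) v by auto
      have sfv: "s (f v) \<in> V.span (a ` \<beta>)" using span_image fv by auto
      moreover have "V.span (a ` \<beta>) \<subseteq> W" by (rule V.span_minimal[OF _ W]) (use a(1) in auto)
      ultimately have "v - s (f v) \<in> W \<inter> {x. f x = 0}"
        using v W f_s[OF fv] VV.linear_diff[OF f] by (auto simp: V.subspace_diff)
      then have "v - s (f v) \<in> V.span \<nu>" using \<nu>(3) by blast
      then have "s (f v) + (v - s (f v)) \<in> V.span (a ` \<beta> \<union> \<nu>)"
        using sfv by (meson V.span_add V.span_mono subsetD sup.cobounded1 sup.cobounded2)
      then show "v \<in> V.span (a ` \<beta> \<union> \<nu>)" by simp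
    qed
  qed
  have "0 \<notin> \<beta>" using \<beta>(1) V.dependent_zero by blast
  then show "a ` \<beta> \<inter> \<nu> = {}" using a(2) \<nu>(2) by fastforce
qed

definition supported_on :: "nat set \<Rightarrow> ('k::field vec \<Rightarrow> 'k vec) \<Rightarrow> bool" where
  "supported_on T f \<longleftrightarrow> (\<forall>v. f (coord_proj T v) = f v) \<and> (\<forall>v. keys (f v) \<subseteq> T)"

lemma supported_on_comp_coord_proj:
  assumes "supported_on T g"
  shows "g (coord_proj T v) = g v" "coord_proj T (g v) = g v"
  using assms unfolding supported_on_def by (simp_all add: coord_proj_id)

lemma supported_on_mono:
  assumes "S \<subseteq> T" "supported_on S f"
  shows "supported_on T f"
proof -
  have "f (coord_proj T v) = f (coord_proj S (coord_proj T v))" for v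
    using assms(2) unfolding supported_on_def by simp
  also have "\<dots> v = f v" for v
    using assms by (simp add: coord_proj_coord_proj Int_absorb2 supported_on_def)
  finally show ?thesis using assms unfolding supported_on_def by blast
qed

lemma supported_on_coord_proj: "supported_on T (coord_proj T)"
  by (simp add: supported_on_def coord_proj_coord_proj keys_coord_proj)

lemma supported_on_zero: "supported_on T (\<lambda>v. 0)"
  by (simp add: supported_on_def)

lemma supported_on_add:
  "supported_on T f \<Longrightarrow> supported_on T g \<Longrightarrow> supported_on T (\<lambda>v. f v + g v)"
  by (auto simp: supported_on_def intro!: order_trans[OF keys_add])

lemma supported_on_scale: "supported_on T f \<Longrightarrow> supported_on T (\<lambda>v. vec_scale c (f v))"
  by (auto simp: supported_on_def intro!: order_trans[OF keys_vec_scale])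

lemma supported_on_comp: "supported_on T f \<Longrightarrow> supported_on T g \<Longrightarrow> supported_on T (f \<circ> g)"
  by (simp add: supported_on_def)

lemma supported_on_from_columns:
  assumes "\<And>j. keys (c j) \<subseteq> T" "\<And>j. j \<notin> T \<Longrightarrow> c j = 0"
  shows "supported_on T (from_columns c)"
proof -
  have "from_columns c \<circ> coord_proj T = from_columns c"
    by (rule lin_eqI)
      (auto simp: coord_proj_unit_vec assms(2) lin_from_columns VV.linear_0[OF lin_from_columns]
        intro: Vector_Spaces.linear_compose[OF lin_coord_proj lin_from_columns])
  moreover have "from_columns c v \<in> V.span (range c)" for v
    using VV.construct_in_span[OF independent_unit_vec[of UNIV], of "\<lambda>b. c (inv unit_vec b)" v]
    by (simp add: from_columns_def image_image inv_f_f[OF inj_unit_vec])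
  moreover have "V.span (range c) \<subseteq> {v. keys v \<subseteq> T}"
    unfolding span_unit_vec[symmetric]
    by (rule V.span_minimal[OF _ V.subspace_span]) (use assms(1) in \<open>auto simp: span_unit_vec\<close>)
  ultimately show ?thesis unfolding supported_on_def by (metis comp_apply mem_Collect_eq subsetD)
qed

lemma supported_section_bases:
  fixes f :: "'k::field vec \<Rightarrow> 'k vec"
  assumes f: "lin f" "supported_on S f"
  obtains B \<beta> a \<nu> where "V.independent B" "V.span B = {v. keys v \<subseteq> S}" "\<beta> \<subseteq> B"
    "range f \<subseteq> V.span \<beta>" "\<And>b. b \<in> \<beta> \<Longrightarrow> f (a b) = b"
    "V.independent (a ` \<beta> \<union> \<nu>)" "V.span (a ` \<beta> \<union> \<nu>) = {v. keys v \<subseteq> S}" "a ` \<beta> \<inter> \<nu> = {}"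
proof -
  define W where "W = {v :: 'k vec. keys v \<subseteq> S}"
  have W: "V.subspace W" using V.subspace_span[of "unit_vec ` S"] by (simp add: span_unit_vec W_def)
  have range_f: "range f \<subseteq> W" using f(2) unfolding supported_on_def W_def by auto
  obtain \<beta> where \<beta>: "\<beta> \<subseteq> range f" "V.independent \<beta>" "range f \<subseteq> V.span \<beta>"
    using V.maximal_independent_subset[of "range f"] by blast
  define a where "a b = coord_proj S (inv f b)" for b
  have a: "a b \<in> W" "f (a b) = b" if "b \<in> \<beta>" for b
    using that \<beta>(1) f(2) keys_coord_proj f_inv_into_f[of b f UNIV]
    unfolding a_def W_def supported_on_def by auto
  have "\<beta> \<subseteq> W" using \<beta>(1) range_f by blast
  then obtain B where B: "\<beta> \<subseteq> B" "B \<subseteq> W" "V.independent B" "W \<subseteq> V.span B"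
    using V.maximal_independent_subset_extend[OF _ \<beta>(2)] by blast
  obtain \<nu> where \<nu>: "\<nu> \<subseteq> W \<inter> {x. f x = 0}" "V.independent \<nu>" "W \<inter> {x. f x = 0} \<subseteq> V.span \<nu>"
    using V.maximal_independent_subset[of "W \<inter> {x. f x = 0}"] by blast
  have "f ` W \<subseteq> V.span \<beta>" using \<beta>(3) by auto
  note kernel_basis = section_kernel_basis[OF f(1) W \<beta>(2) this a \<nu>(2,1,3)]
  have "V.span B = {v. keys v \<subseteq> S}" using V.span_subspace[OF B(2,4) W] unfolding W_def .
  then show ?thesis by (rule that[OF B(3) _ B(1) \<beta>(3) a(2) kernel_basis[unfolded W_def]])
qed

lemma matched_bases_of_supported:
  fixes f :: "'k::field vec \<Rightarrow> 'k vec"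
  assumes f: "lin f" "supported_on S f" and X: "infinite X" "S \<inter> X = {}"
  obtains C D h \<beta> where "V.independent C" "V.span C = {v. keys v \<subseteq> S \<union> X}"
    "V.independent D" "V.span D = {v. keys v \<subseteq> S \<union> X}"
    "bij_betw h C D" "\<beta> \<subseteq> C" "range f \<subseteq> V.span \<beta>" "\<And>b. b \<in> \<beta> \<Longrightarrow> f (h b) = b"
proof -
  obtain B \<beta> a \<nu> where B: "V.independent B" "V.span B = {v. keys v \<subseteq> S}" "\<beta> \<subseteq> B"
    and \<beta>: "range f \<subseteq> V.span \<beta>" "\<And>b. b \<in> \<beta> \<Longrightarrow> f (a b) = b"
    and A: "V.independent (a ` \<beta> \<union> \<nu>)" "V.span (a ` \<beta> \<union> \<nu>) = {v. keys v \<subseteq> S}" "a ` \<beta> \<inter> \<nu> = {}"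
    using supported_section_bases[OF f] by blast
  txt \<open>The leftover parts of the two bases become countably infinite, hence equinumerous,
    once the unit vectors of \<open>X\<close> are added to both.\<close>
  define G where "G = (B - \<beta>) \<union> unit_vec ` X"
  define N where "N = \<nu> \<union> unit_vec ` X"
  have "B \<subseteq> {v. keys v \<subseteq> S}" "a ` \<beta> \<subseteq> {v. keys v \<subseteq> S}"
    using V.span_superset[of B] V.span_superset[of "a ` \<beta> \<union> \<nu>"] B(2) A(2) by auto
  moreover have "unit_vec x \<notin> {v. keys v \<subseteq> S}" if "x \<in> X" for x
    using that X(2) by auto
  ultimately have "B \<inter> unit_vec ` X = {}" "a ` \<beta> \<inter> unit_vec ` X = {}" by auto
  then have disj: "\<beta> \<inter> G = {}" "a ` \<beta> \<inter> N = {}"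
    using B(3) A(3) unfolding G_def N_def by (auto simp: Int_Un_distrib)
  have "infinite (unit_vec ` X :: 'k vec set)"
    using X(1) finite_imageD inj_on_subset[OF inj_unit_vec] by blast
  then have infinite: "infinite G" "infinite N" unfolding G_def N_def by simp_all
  have countable: "countable G" "countable N" unfolding G_def N_def
    using countable_independent[OF V.independent_mono[OF B(1)]]
      countable_independent[OF V.independent_mono[OF A(1)]]
    by auto
  have "inj_on a \<beta>" using \<beta>(2) by (metis inj_on_inverseI)
  then obtain h where "bij_betw h (\<beta> \<union> G) (a ` \<beta> \<union> N)" and h: "\<And>b. b \<in> \<beta> \<Longrightarrow> h b = a b"
    using bij_betw_extend_countably_infinite disj countable infinite by metis
  moreover have "\<beta> \<union> G = B \<union> unit_vec ` X" "a ` \<beta> \<union> N = (a ` \<beta> \<union> \<nu>) \<union> unit_vec ` X"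
    using B(3) unfolding G_def N_def by auto
  ultimately have "bij_betw h (B \<union> unit_vec ` X) ((a ` \<beta> \<union> \<nu>) \<union> unit_vec ` X)" by simp
  moreover have "\<beta> \<subseteq> B \<union> unit_vec ` X" "\<And>b. b \<in> \<beta> \<Longrightarrow> f (h b) = b"
    using B(3) \<beta>(2) h by auto
  ultimately show ?thesis
    by (rule that[OF extend_basis_unit_vec[OF B(1,2) X(2)] extend_basis_unit_vec[OF A(1,2) X(2)]
        _ _ \<beta>(1)])
qed

lemma supported_unit_regular:
  fixes f :: "'k::field vec \<Rightarrow> 'k vec"
  assumes f: "lin f" "supported_on S f" and X: "infinite X" "S \<inter> X = {}"
  obtains u w where "lin u" "lin w" "supported_on (S \<union> X) u" "supported_on (S \<union> X) w"
    "u \<circ> w = coord_proj (S \<union> X)" "w \<circ> u = coord_proj (S \<union> X)" "f \<circ> u \<circ> f = f"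
proof -
  let ?T = "S \<union> X"
  obtain C D h \<beta> where C: "V.independent C" "V.span C = {v. keys v \<subseteq> ?T}"
    and D: "V.independent D" "V.span D = {v. keys v \<subseteq> ?T}"
    and h: "bij_betw h C D" and \<beta>: "\<beta> \<subseteq> C" "range f \<subseteq> V.span \<beta>" "\<And>b. b \<in> \<beta> \<Longrightarrow> f (h b) = b"
    using matched_bases_of_supported[OF f X] by metis
  define P where "P = (coord_proj ?T :: 'k vec \<Rightarrow> 'k vec)"
  define \<phi> where "\<phi> = VV.construct C h"
  define \<psi> where "\<psi> = VV.construct D (inv_into C h)"
  have lin: "lin \<phi>" "lin \<psi>"
    unfolding \<phi>_def \<psi>_def by (simp_all add: VV.linear_construct C(1) D(1))
  note construct = construct_inv_into[OF C(1) D(1) h, folded \<phi>_def \<psi>_def, unfolded C(2) D(2)]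
  have P: "P (P v) = P v" "keys (P v) \<subseteq> ?T" "keys x \<subseteq> ?T \<Longrightarrow> P x = x" for v x
    unfolding P_def by (simp_all add: coord_proj_coord_proj keys_coord_proj coord_proj_id)
  have f_section: "f (\<phi> y) = y" if "y \<in> V.span \<beta>" for y
    unfolding \<phi>_def using construct_section[OF f(1) C(1) \<beta>(1,3) that] .
  have f_\<phi>_f: "f (\<phi> (P (f v))) = f v" for v
  proof -
    have "keys (f v) \<subseteq> ?T" using f(2) unfolding supported_on_def by blast
    moreover have "f v \<in> V.span \<beta>" using \<beta>(2) by auto
    ultimately show ?thesis using P(3) f_section by simp
  qed
  show ?thesis
  proof (rule that)
    show "lin (\<phi> \<circ> P)" "lin (\<psi> \<circ> P)"
      unfolding P_def by (rule Vector_Spaces.linear_compose[OF lin_coord_proj lin(1)],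
        rule Vector_Spaces.linear_compose[OF lin_coord_proj lin(2)])
    show "supported_on ?T (\<phi> \<circ> P)" "supported_on ?T (\<psi> \<circ> P)"
      using P construct(1,2) unfolding supported_on_def P_def by simp_all
    show "(\<phi> \<circ> P) \<circ> (\<psi> \<circ> P) = coord_proj ?T" "(\<psi> \<circ> P) \<circ> (\<phi> \<circ> P) = coord_proj ?T"
      using P construct by (simp_all add: fun_eq_iff P_def)
    show "f \<circ> (\<phi> \<circ> P) \<circ> f = f" using f_\<phi>_f by (simp add: fun_eq_iff)
  qed
qed

section \<open>The algebra of block-supported maps\<close>

definition blocks_below :: "nat \<Rightarrow> nat set" where
  "blocks_below n = {i. fst (prod_decode i) < n}"

lemma blocks_below_mono: "m \<le> n \<Longrightarrow> blocks_below m \<subseteq> blocks_below n"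
  unfolding blocks_below_def by auto

lemma infinite_block: "infinite (blocks_below (Suc n) - blocks_below n)"
proof -
  have "range (\<lambda>m. prod_encode (n, m)) \<subseteq> blocks_below (Suc n) - blocks_below n"
    by (auto simp: blocks_below_def)
  moreover have "infinite (range (\<lambda>m. prod_encode (n, m)))"
    by (rule range_inj_infinite) (simp add: inj_def prod_encode_eq)
  ultimately show ?thesis using infinite_super by blast
qed

definition block_maps :: "('k::field vec \<Rightarrow> 'k vec) set" where
  "block_maps = {f. lin f \<and> (\<exists>n. supported_on (blocks_below n) f)}"

lemma block_maps_lin [simp]: "f \<in> block_maps \<Longrightarrow> lin f"
  by (simp add: block_maps_def)

lemma block_maps_common_support:
  assumes "f \<in> block_maps" "g \<in> block_maps"
  obtains n where "supported_on (blocks_below n) f" "supported_on (blocks_below n) g"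
proof -
  obtain m n where "supported_on (blocks_below m) f" "supported_on (blocks_below n) g"
    using assms unfolding block_maps_def by blast
  then show ?thesis
    using that[of "max m n"] supported_on_mono blocks_below_mono by (metis max.cobounded1 max.cobounded2)
qed

lemmas lin_closure [simp] =
  VV.linear_compose_add VV.linear_compose_sub VV.linear_compose_neg VV.linear_compose_scale_right
  VV.linear_zero
  Vector_Spaces.linear_compose[of vec_scale vec_scale _ vec_scale]

lemma block_maps_closed:
  assumes "f \<in> block_maps" "g \<in> block_maps"
  shows "(\<lambda>v. f v + g v) \<in> block_maps" "f \<circ> g \<in> block_maps" "(\<lambda>v. vec_scale c (f v)) \<in> block_maps"
proof -
  obtain n where "supported_on (blocks_below n) f" "supported_on (blocks_below n) g"
    using assms by (rule block_maps_common_support)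
  with assms show "(\<lambda>v. f v + g v) \<in> block_maps" "f \<circ> g \<in> block_maps"
    "(\<lambda>v. vec_scale c (f v)) \<in> block_maps"
    unfolding block_maps_def
    by (auto intro: supported_on_add supported_on_comp supported_on_scale)
qed

lemma zero_in_block_maps: "(\<lambda>v. 0) \<in> block_maps"
  unfolding block_maps_def using supported_on_zero by auto

lemma coord_proj_in_block_maps: "coord_proj (blocks_below n) \<in> block_maps"
  unfolding block_maps_def using supported_on_coord_proj by auto

definition mat :: "('k::field vec \<Rightarrow> 'k vec) \<Rightarrow> nat \<Rightarrow> nat \<Rightarrow> 'k" where
  "mat f i j = lookup (f (unit_vec j)) i"

lemma inj_on_mat: "inj_on mat {f :: 'k::field vec \<Rightarrow> 'k vec. lin f}"
proof (rule inj_onI)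
  fix f g :: "'k vec \<Rightarrow> 'k vec"
  assume "f \<in> {f. lin f}" "g \<in> {f. lin f}" "mat f = mat g"
  then show "f = g"
    by (intro lin_eqI poly_mapping_eqI) (auto simp: mat_def fun_eq_iff)
qed

lemma mat_eq_iff: "lin f \<Longrightarrow> lin g \<Longrightarrow> mat f = mat g \<longleftrightarrow> f = g"
  using inj_on_mat by (auto dest: inj_onD)

definition lin_of_mat :: "(nat \<Rightarrow> nat \<Rightarrow> 'k) \<Rightarrow> 'k::field vec \<Rightarrow> 'k vec" where
  "lin_of_mat = the_inv_into {f. lin f} mat"

lemma lin_of_mat_mat [simp]: "lin f \<Longrightarrow> lin_of_mat (mat f) = f"
  unfolding lin_of_mat_def by (rule the_inv_into_f_f[OF inj_on_mat]) simp

definition block_alg :: "('k::field, nat \<Rightarrow> nat \<Rightarrow> 'k) kalg" where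
  "block_alg =
    \<lparr>carr = mat ` block_maps,
     add = (\<lambda>x y. mat (\<lambda>v. lin_of_mat x v + lin_of_mat y v)),
     mul = (\<lambda>x y. mat (lin_of_mat x \<circ> lin_of_mat y)),
     zer = mat (\<lambda>v. 0),
     smul = (\<lambda>c x. mat (\<lambda>v. vec_scale c (lin_of_mat x v)))\<rparr>"

lemma block_alg_simps [simp]:
  "carr block_alg = mat ` block_maps"
  "zer block_alg = mat (\<lambda>v. 0)"
  "lin f \<Longrightarrow> lin g \<Longrightarrow> add block_alg (mat f) (mat g) = mat (\<lambda>v. f v + g v)"
  "lin f \<Longrightarrow> lin g \<Longrightarrow> mul block_alg (mat f) (mat g) = mat (f \<circ> g)"
  "lin f \<Longrightarrow> smul block_alg c (mat f) = mat (\<lambda>v. vec_scale c (f v))"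
  by (simp_all add: block_alg_def)

theorem is_kalgebra_block_alg: "is_kalgebra (block_alg :: ('k::field, nat \<Rightarrow> nat \<Rightarrow> 'k) kalg)"
  unfolding is_kalgebra_def block_alg_simps(1,2) ball_simps(9)
proof (intro conjI allI ballI)
  show "mat (\<lambda>v. 0) \<in> mat ` (block_maps :: ('k vec \<Rightarrow> 'k vec) set)"
    using zero_in_block_maps by (rule imageI)
  fix f g h :: "'k vec \<Rightarrow> 'k vec" and a b :: 'k
  assume f: "f \<in> block_maps" and g: "g \<in> block_maps" and h: "h \<in> block_maps"
  then have [simp]: "lin f" "lin g" "lin h" by simp_all
  show "add block_alg (mat f) (mat g) \<in> mat ` block_maps"
    "mul block_alg (mat f) (mat g) \<in> mat ` block_maps"
    "smul block_alg a (mat f) \<in> mat ` block_maps"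
    using block_maps_closed[OF f g] by simp_all
  show "\<exists>y\<in>mat ` block_maps. add block_alg (mat f) y = mat (\<lambda>v. 0)"
  proof
    show "mat (\<lambda>v. - f v) \<in> mat ` block_maps" using block_maps_closed(3)[OF f f, of "-1"] by simp
  qed simp
  show "add block_alg (add block_alg (mat f) (mat g)) (mat h) =
      add block_alg (mat f) (add block_alg (mat g) (mat h))"
    "add block_alg (mat f) (mat g) = add block_alg (mat g) (mat f)"
    "add block_alg (mat (\<lambda>v. 0)) (mat f) = mat f"
    "mul block_alg (mul block_alg (mat f) (mat g)) (mat h) =
      mul block_alg (mat f) (mul block_alg (mat g) (mat h))"
    "smul block_alg (a + b) (mat f) = add block_alg (smul block_alg a (mat f)) (smul block_alg b (mat f))"
    "smul block_alg a (add block_alg (mat f) (mat g)) =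
      add block_alg (smul block_alg a (mat f)) (smul block_alg a (mat g))"
    "smul block_alg (a * b) (mat f) = smul block_alg a (smul block_alg b (mat f))"
    "smul block_alg 1 (mat f) = mat f"
    by (simp_all add: add_ac comp_assoc V.scale_left_distrib V.scale_right_distrib)
  have "f \<circ> (\<lambda>v. g v + h v) = (\<lambda>v. (f \<circ> g) v + (f \<circ> h) v)"
    "(\<lambda>v. f v + g v) \<circ> h = (\<lambda>v. (f \<circ> h) v + (g \<circ> h) v)"
    "(\<lambda>v. vec_scale a (f v)) \<circ> g = (\<lambda>v. vec_scale a ((f \<circ> g) v))"
    "f \<circ> (\<lambda>v. vec_scale a (g v)) = (\<lambda>v. vec_scale a ((f \<circ> g) v))"
    by (auto simp: VV.linear_add VV.linear_scale)
  then show "mul block_alg (mat f) (add block_alg (mat g) (mat h)) =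
      add block_alg (mul block_alg (mat f) (mat g)) (mul block_alg (mat f) (mat h))"
    "mul block_alg (add block_alg (mat f) (mat g)) (mat h) =
      add block_alg (mul block_alg (mat f) (mat h)) (mul block_alg (mat g) (mat h))"
    "smul block_alg a (mul block_alg (mat f) (mat g)) = mul block_alg (smul block_alg a (mat f)) (mat g)"
    "smul block_alg a (mul block_alg (mat f) (mat g)) = mul block_alg (mat f) (smul block_alg a (mat g))"
    by simp_all
qed

lemma mat_in_corner:
  assumes "lin g" "supported_on (blocks_below n) g"
  shows "mat g \<in> corner block_alg (mat (coord_proj (blocks_below n)))"
proof -
  let ?P = "coord_proj (blocks_below n)"
  have "?P \<circ> (g \<circ> ?P) = g"
    using assms(2) unfolding supported_on_def by (simp add: fun_eq_iff coord_proj_id)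
  then have "mat g = mul block_alg (mat ?P) (mul block_alg (mat g) (mat ?P))"
    using assms(1) by simp
  moreover have "mat g \<in> carr block_alg"
    using assms unfolding block_alg_simps(1) block_maps_def by blast
  ultimately show ?thesis unfolding corner_def by blast
qed

theorem elementwise_locally_unit_regular_block_alg:
  "elementwise_locally_unit_regular (block_alg :: ('k::field, nat \<Rightarrow> nat \<Rightarrow> 'k) kalg)"
  unfolding elementwise_locally_unit_regular_def block_alg_simps(1) ball_simps(9)
proof
  fix f :: "'k vec \<Rightarrow> 'k vec" assume "f \<in> block_maps"
  then obtain n where f: "lin f" "supported_on (blocks_below n) f" unfolding block_maps_def by blast
  let ?T = "blocks_below (Suc n)"
  let ?e = "mat (coord_proj ?T)"
  have T: "blocks_below n \<union> (?T - blocks_below n) = ?T"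
    using blocks_below_mono[of n "Suc n"] by auto
  obtain u w where "lin u" "lin w" "supported_on ?T u" "supported_on ?T w"
    "u \<circ> w = coord_proj ?T" "w \<circ> u = coord_proj ?T" "f \<circ> u \<circ> f = f"
    using supported_unit_regular[OF f infinite_block Diff_disjoint, unfolded T] by blast
  moreover have "supported_on ?T f" by (rule supported_on_mono[OF blocks_below_mono f(2)]) simp
  ultimately have "mat f \<in> corner block_alg ?e" "mat u \<in> corner block_alg ?e"
    "mat w \<in> corner block_alg ?e" "mul block_alg (mat u) (mat w) = ?e" "mul block_alg (mat w) (mat u) = ?e"
    "mul block_alg (mul block_alg (mat f) (mat u)) (mat f) = mat f"
    using f(1) by (simp_all add: mat_in_corner)
  then have "is_unit_in block_alg (corner block_alg ?e) ?e (mat u)"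
    "mat f \<in> corner block_alg ?e" "mul block_alg (mul block_alg (mat f) (mat u)) (mat f) = mat f"
    unfolding is_unit_in_def by blast+
  moreover have "mul block_alg ?e ?e = ?e" by (simp add: comp_def coord_proj_coord_proj)
  moreover have "?e \<in> mat ` block_maps" using coord_proj_in_block_maps by blast
  ultimately show "\<exists>e\<in>mat ` block_maps. mul block_alg e e = e \<and> mat f \<in> corner block_alg e \<and>
      (\<exists>u. is_unit_in block_alg (corner block_alg e) e u \<and>
        mul block_alg (mul block_alg (mat f) u) (mat f) = mat f)"
    by blast
qed

section \<open>Failure of local unit-regularity\<close>

lemma unit_regular_directly_finite:
  assumes A: "is_kalgebra A"
    and S: "is_subalgebra A S" "is_identity_of A S e" "unit_regular_in A S e"
    and xy: "x \<in> S" "y \<in> S" "mul A x y = e"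
  shows "mul A y x = e"
proof -
  have closed: "mul A a b \<in> S" if "a \<in> S" "b \<in> S" for a b
    using S(1) that unfolding is_subalgebra_def by blast
  have assoc: "mul A (mul A a b) c = mul A a (mul A b c)" if "a \<in> S" "b \<in> S" "c \<in> S" for a b c
  proof -
    have "\<forall>x\<in>carr A. \<forall>y\<in>carr A. \<forall>z\<in>carr A. mul A (mul A x y) z = mul A x (mul A y z)"
      using A unfolding is_kalgebra_def by (elim conjE)
    moreover have "S \<subseteq> carr A" using S(1) unfolding is_subalgebra_def by (elim conjE)
    ultimately show ?thesis using that by blast
  qed
  have e_left: "mul A e a = a" and e_right: "mul A a e = a" if "a \<in> S" for a
    using S(2) that unfolding is_identity_of_def by auto
  obtain u v where u: "u \<in> S" "v \<in> S" "mul A u v = e" "mul A v u = e" "mul A (mul A x u) x = x"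
    using S(3) xy(1) unfolding unit_regular_in_def is_unit_in_def by blast
  have xu: "mul A x u = e"
  proof -
    have "mul A x u = mul A (mul A x u) (mul A x y)"
      using e_right[OF closed[OF xy(1) u(1)]] xy(3) by simp
    also have "\<dots> = mul A (mul A (mul A x u) x) y"
      using assoc[OF closed[OF xy(1) u(1)] xy(1,2)] by simp
    finally show ?thesis using u(5) xy(3) by simp
  qed
  have "x = v"
  proof -
    have "x = mul A x (mul A u v)" using e_right[OF xy(1)] u(3) by simp
    also have "\<dots> = v" using assoc[OF xy(1) u(1,2)] xu e_left[OF u(2)] by simp
    finally show ?thesis .
  qed
  have "y = u"
  proof -
    have "y = mul A (mul A u v) y" using e_left[OF xy(2)] u(3) by simp
    also have "\<dots> = u" using assoc[OF u(1,2) xy(2)] \<open>x = v\<close> xy(3) e_right[OF u(1)] by simp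
    finally show ?thesis .
  qed
  then show ?thesis using \<open>x = v\<close> u(3) by simp
qed

lemma prod_encode_snd_prod_decode: "fst (prod_decode j) = 0 \<Longrightarrow> prod_encode (0, snd (prod_decode j)) = j"
  by (metis prod.collapse prod_decode_inverse)

text \<open>Block 0 consists of the indices \<open>prod_encode (0, m)\<close>; the shifts move \<open>m\<close> up and down.\<close>

definition shift_right :: "'k::field vec \<Rightarrow> 'k vec" where
  "shift_right = from_columns (\<lambda>j. if j \<in> blocks_below 1
     then unit_vec (prod_encode (0, snd (prod_decode j) + 1)) else 0)"

definition shift_left :: "'k::field vec \<Rightarrow> 'k vec" where
  "shift_left = from_columns (\<lambda>j. if j \<in> blocks_below 1 \<and> snd (prod_decode j) \<noteq> 0
     then unit_vec (prod_encode (0, snd (prod_decode j) - 1)) else 0)"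

lemma lin_shift [simp]: "lin shift_right" "lin shift_left"
  by (simp_all add: shift_right_def shift_left_def lin_from_columns)

lemma supported_on_shift: "supported_on (blocks_below 1) shift_right" "supported_on (blocks_below 1) shift_left"
  unfolding shift_right_def shift_left_def
  by (auto intro!: supported_on_from_columns simp: blocks_below_def prod_encode_inverse split: if_split_asm)

lemma shift_left_right: "shift_left \<circ> shift_right = coord_proj (blocks_below 1)"
  by (rule lin_eqI)
    (simp_all add: shift_right_def shift_left_def lin_from_columns coord_proj_unit_vec blocks_below_def
      prod_encode_inverse prod_encode_snd_prod_decode VV.linear_0[OF lin_from_columns])

lemma shift_right_left_neq:
  "shift_right \<circ> shift_left \<noteq> (coord_proj (blocks_below 1) :: 'k::field vec \<Rightarrow> 'k vec)"
proof
  let ?o = "unit_vec (prod_encode (0, 0)) :: 'k vec"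
  assume "shift_right \<circ> shift_left = (coord_proj (blocks_below 1) :: 'k vec \<Rightarrow> 'k vec)"
  then have "shift_right (shift_left ?o) = coord_proj (blocks_below 1) ?o"
    by (simp add: fun_eq_iff)
  moreover have "shift_left ?o = 0" by (simp add: shift_left_def prod_encode_inverse)
  moreover have "coord_proj (blocks_below 1) ?o = ?o"
    by (simp add: coord_proj_unit_vec blocks_below_def prod_encode_inverse)
  ultimately have "?o = 0" using VV.linear_0[OF lin_shift(1)] by metis
  then show False by (simp flip: keys_eq_empty)
qed

lemma shift_in_block_maps: "shift_right \<in> block_maps" "shift_left \<in> block_maps"
  unfolding block_maps_def using supported_on_shift by auto

lemma shift_perturbation:
  fixes F :: "'k::field vec \<Rightarrow> 'k vec"
  defines "P \<equiv> coord_proj (blocks_below 1)"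
  defines "C \<equiv> \<lambda>v. shift_left v + (F v - P v)" and "C' \<equiv> \<lambda>v. shift_right v + (F v - P v)"
  assumes F: "lin F" "F \<circ> F = F"
    and identity: "\<And>g. g \<in> {shift_right, shift_left, P} \<Longrightarrow> F \<circ> g = g \<and> g \<circ> F = g"
  shows "C \<circ> C' = F" "C' \<circ> C \<noteq> F"
proof -
  have pw: "F (shift_right v) = shift_right v" "F (shift_left v) = shift_left v"
    "shift_right (F v) = shift_right v" "shift_left (F v) = shift_left v"
    "F (F v) = F v" "F (P v) = P v" "P (F v) = P v" "shift_left (shift_right v) = P v" for v
    using identity F(2) shift_left_right unfolding P_def by (auto simp: fun_eq_iff)
  note supp = supported_on_comp_coord_proj[OF supported_on_shift(1)]
    supported_on_comp_coord_proj[OF supported_on_shift(2)]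
    supported_on_comp_coord_proj[OF supported_on_coord_proj]
  txt \<open>\<open>One_nat_def\<close> would turn \<open>blocks_below 1\<close> into \<open>blocks_below (Suc 0)\<close>,
    out of reach of \<open>pw\<close>.\<close>
  show "C \<circ> C' = F"
    by (simp add: fun_eq_iff C_def C'_def P_def VV.linear_add VV.linear_diff F(1) pw[unfolded P_def] supp
        del: One_nat_def)
  show "C' \<circ> C \<noteq> F"
  proof
    assume "C' \<circ> C = F"
    then have "shift_right \<circ> shift_left = P"
      by (simp add: fun_eq_iff C_def C'_def P_def VV.linear_add VV.linear_diff F(1) pw[unfolded P_def] supp
          del: One_nat_def)
    with shift_right_left_neq show False unfolding P_def ..
  qed
qed

lemma subalgebra_block_alg_closed:
  assumes S: "is_subalgebra block_alg S" and gh: "lin g" "lin h" "mat g \<in> S" "mat h \<in> S"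
  shows "mat (\<lambda>v. g v + h v) \<in> S" "mat (\<lambda>v. g v - h v) \<in> S" "mat (g \<circ> h) \<in> S"
proof -
  have "add block_alg (mat g) (mat h) \<in> S" "mul block_alg (mat g) (mat h) \<in> S"
    "add block_alg (mat g) (smul block_alg (-1) (mat h)) \<in> S"
    using S gh(3,4) unfolding is_subalgebra_def by blast+
  then show "mat (\<lambda>v. g v + h v) \<in> S" "mat (\<lambda>v. g v - h v) \<in> S" "mat (g \<circ> h) \<in> S"
    using gh(1,2) by simp_all
qed

lemma identity_of_block_alg:
  assumes S: "is_subalgebra block_alg S" "is_identity_of block_alg S e"
  obtains F where "lin F" "e = mat F" "mat F \<in> S"
    "\<And>g. lin g \<Longrightarrow> mat g \<in> S \<Longrightarrow> F \<circ> g = g \<and> g \<circ> F = g"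
proof -
  have "e \<in> S" using S(2) unfolding is_identity_of_def by simp
  moreover have "S \<subseteq> mat ` block_maps" using S(1) unfolding is_subalgebra_def by simp
  ultimately obtain F where "F \<in> block_maps" "e = mat F" by blast
  with \<open>e \<in> S\<close> have F: "lin F" "e = mat F" "mat F \<in> S" by simp_all
  have "F \<circ> g = g \<and> g \<circ> F = g" if "lin g" "mat g \<in> S" for g
  proof -
    have "mul block_alg e (mat g) = mat g" "mul block_alg (mat g) e = mat g"
      using S(2) that(2) unfolding is_identity_of_def by simp_all
    then show ?thesis using that(1) F(1,2) by (simp add: mat_eq_iff)
  qed
  with F show ?thesis by (rule that)
qed

theorem not_locally_unit_regular_block_alg:
  "\<not> locally_unit_regular (block_alg :: ('k::field, nat \<Rightarrow> nat \<Rightarrow> 'k) kalg)"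
proof
  let ?P = "coord_proj (blocks_below 1) :: 'k vec \<Rightarrow> 'k vec"
  let ?gens = "{mat shift_right, mat shift_left} :: (nat \<Rightarrow> nat \<Rightarrow> 'k) set"
  assume lur: "locally_unit_regular (block_alg :: ('k, nat \<Rightarrow> nat \<Rightarrow> 'k) kalg)"
  have "finite ?gens" by simp
  moreover have "?gens \<subseteq> carr block_alg"
    using imageI[OF shift_in_block_maps(1), of mat] imageI[OF shift_in_block_maps(2), of mat] by simp
  ultimately have "\<exists>S e. is_subalgebra block_alg S \<and> ?gens \<subseteq> S \<and> is_identity_of block_alg S e \<and>
      unit_regular_in block_alg S e"
    by (rule lur[unfolded locally_unit_regular_def, rule_format, OF conjI])
  then obtain S e where S: "is_subalgebra block_alg S" "is_identity_of block_alg S e"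
      "unit_regular_in block_alg S e" and "?gens \<subseteq> S"
    by blast
  then have shifts: "mat shift_right \<in> S" "mat shift_left \<in> S" by simp_all
  obtain F where F: "lin F" "e = mat F" "mat F \<in> S"
    and identity: "\<And>g. lin g \<Longrightarrow> mat g \<in> S \<Longrightarrow> F \<circ> g = g \<and> g \<circ> F = g"
    using identity_of_block_alg[OF S(1,2)] by blast
  let ?C = "\<lambda>v. shift_left v + (F v - ?P v)" and ?C' = "\<lambda>v. shift_right v + (F v - ?P v)"
  note closed = subalgebra_block_alg_closed[OF S(1)]
  have "mat ?P \<in> S" using closed(3)[OF lin_shift(2,1) shifts(2,1)] by (simp add: shift_left_right)
  then have "mat (\<lambda>v. F v - ?P v) \<in> S" using closed(2)[OF F(1) lin_coord_proj F(3)] by simp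
  then have C_in_S: "mat ?C \<in> S" "mat ?C' \<in> S" using closed(1) shifts F(1) by simp_all
  have "F \<circ> F = F" using identity[OF F(1,3)] by simp
  moreover have "F \<circ> g = g \<and> g \<circ> F = g" if "g \<in> {shift_right, shift_left, ?P}" for g
    using that identity[OF lin_shift(1) shifts(1)] identity[OF lin_shift(2) shifts(2)]
      identity[OF lin_coord_proj \<open>mat ?P \<in> S\<close>]
    by auto
  ultimately have C: "?C \<circ> ?C' = F" "?C' \<circ> ?C \<noteq> F" using shift_perturbation[OF F(1)] by blast+
  then have "mul block_alg (mat ?C) (mat ?C') = e" using F(1,2) by simp
  then have "mul block_alg (mat ?C') (mat ?C) = e"
    by (rule unit_regular_directly_finite[OF is_kalgebra_block_alg S C_in_S])
  then have "?C' \<circ> ?C = F" using F(1,2) by (simp add: mat_eq_iff)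
  with C(2) show False ..
qed

theorem mainTheorem16:
  "\<exists>A :: ('k::field, nat \<Rightarrow> nat \<Rightarrow> 'k) kalg.
     is_kalgebra A \<and> elementwise_locally_unit_regular A \<and> \<not> locally_unit_regular A"
  using is_kalgebra_block_alg elementwise_locally_unit_regular_block_alg
    not_locally_unit_regular_block_alg by blast

end
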